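(* Let $F$ be a field of characteristic zero and let $\mathrm{Gr}$ be the Grassmann (exterior) algebra over $F$ of a vector space $V$ with basis $e_1,\dots,e_n$ ($n\in\mathbb N$) or with countable basis $e_1,e_2,\dots$. Then every Rota–Baxter operator $R$ of nonzero weight $\lambda$ on $\mathrm{Gr}$ is splitting, and, up to replacing $R$ by $-R-\lambda\,\mathrm{id}$, we have $R(1)=0$.
   Context: A linear operator $R$ on an algebra $A$ is a Rota–Baxter operator of weight $\lambda$ if $R(x)R(y)=R(R(x)y+xR(y)+\lambda xy)$ for all $x,y\in A$. Such $R$ is splitting if $A=A_1\oplus A_2$ as vector spaces for subalgebras $A_1,A_2$ and $R(a_1+a_2)=-\lambda a_2$ for $a_i\in A_i$. *)

theory Defs
  imports Main
begin

text \<open>An element is a finitely supported coefficient function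
  on finite subsets S of I; S stands for the monomial e_{s1} ... e_{sk}, s1 < ... < sk.\<close>

definition gr :: "nat set \<Rightarrow> (nat set \<Rightarrow> 'a::field) set" where
  "gr I = {x. finite {S. x S \<noteq> 0} \<and> (\<forall>S. x S \<noteq> 0 \<longrightarrow> finite S \<and> S \<subseteq> I)}"

definition gzero :: "nat set \<Rightarrow> 'a::field" where
  "gzero = (\<lambda>S. 0)"

definition gone :: "nat set \<Rightarrow> 'a::field" where
  "gone = (\<lambda>S. if S = {} then 1 else 0)"

definition gadd :: "(nat set \<Rightarrow> 'a::field) \<Rightarrow> (nat set \<Rightarrow> 'a) \<Rightarrow> (nat set \<Rightarrow> 'a)" where
  "gadd x y = (\<lambda>S. x S + y S)"

definition gscale :: "'a::field \<Rightarrow> (nat set \<Rightarrow> 'a) \<Rightarrow> (nat set \<Rightarrow> 'a)" where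
  "gscale c x = (\<lambda>S. c * x S)"

text \<open>Sign of e_S e_T = sign * e_{S \<union> T} for disjoint S, T: (-1)^(number of inversions).\<close>
definition gsign :: "nat set \<Rightarrow> nat set \<Rightarrow> 'a::field" where
  "gsign S T = (-1) ^ card {(s, t). s \<in> S \<and> t \<in> T \<and> t < s}"

definition gmul :: "(nat set \<Rightarrow> 'a::field) \<Rightarrow> (nat set \<Rightarrow> 'a) \<Rightarrow> (nat set \<Rightarrow> 'a)" where
  "gmul x y = (\<lambda>U. if finite U then (\<Sum>S\<in>Pow U. gsign S (U - S) * x S * y (U - S)) else 0)"

definition gr_linear :: "nat set \<Rightarrow> ((nat set \<Rightarrow> 'a::field) \<Rightarrow> (nat set \<Rightarrow> 'a)) \<Rightarrow> bool" where
  "gr_linear I R \<longleftrightarrow> (\<forall>x\<in>gr I. R x \<in> gr I)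
     \<and> (\<forall>x\<in>gr I. \<forall>y\<in>gr I. R (gadd x y) = gadd (R x) (R y))
     \<and> (\<forall>c. \<forall>x\<in>gr I. R (gscale c x) = gscale c (R x))"

definition rota_baxter :: "nat set \<Rightarrow> 'a::field \<Rightarrow> ((nat set \<Rightarrow> 'a) \<Rightarrow> (nat set \<Rightarrow> 'a)) \<Rightarrow> bool" where
  "rota_baxter I lam R \<longleftrightarrow> gr_linear I R \<and>
     (\<forall>x\<in>gr I. \<forall>y\<in>gr I. gmul (R x) (R y) =
        R (gadd (gadd (gmul (R x) y) (gmul x (R y))) (gscale lam (gmul x y))))"

definition gr_subalgebra :: "nat set \<Rightarrow> (nat set \<Rightarrow> 'a::field) set \<Rightarrow> bool" where
  "gr_subalgebra I A \<longleftrightarrow> A \<subseteq> gr I \<and> gzero \<in> A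
     \<and> (\<forall>x\<in>A. \<forall>y\<in>A. gadd x y \<in> A)
     \<and> (\<forall>c. \<forall>x\<in>A. gscale c x \<in> A)
     \<and> (\<forall>x\<in>A. \<forall>y\<in>A. gmul x y \<in> A)"

definition splitting :: "nat set \<Rightarrow> 'a::field \<Rightarrow> ((nat set \<Rightarrow> 'a) \<Rightarrow> (nat set \<Rightarrow> 'a)) \<Rightarrow> bool" where
  "splitting I lam R \<longleftrightarrow> (\<exists>A1 A2. gr_subalgebra I A1 \<and> gr_subalgebra I A2
     \<and> A1 \<inter> A2 = {gzero}
     \<and> (\<forall>x\<in>gr I. \<exists>a1\<in>A1. \<exists>a2\<in>A2. x = gadd a1 a2)
     \<and> (\<forall>a1\<in>A1. \<forall>a2\<in>A2. R (gadd a1 a2) = gscale (- lam) a2))"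

end

theory Submission
  imports Defs
begin

text \<open>For \<open>c \<in> {0, \<lambda>}\<close> the map \<open>R + c id\<close> is a homomorphism from \<open>Gr\<close> with the product
  \<open>x \<circ> y = R(x) y + x R(y) + \<lambda> x y\<close> to \<open>Gr\<close>. Elements without constant term are nilpotent, so
  Newton's iteration turns any element whose image under \<open>R + c id\<close> has invertible constant
  term into a preimage of \<open>1\<close>. If \<open>R + c id\<close> hits \<open>1\<close>, iterated left multiplication by the
  preimage shows \<open>(R + c id)(R + d id) = 0\<close> for \<open>{c, d} = {0, \<lambda>}\<close>, i.e. \<open>R\<^sup>2 = -\<lambda> R\<close>, and
  then \<open>Gr\<close> splits into the kernels of \<open>R\<close> and \<open>R + \<lambda> id\<close>, both subalgebras. The constant term
  of \<open>R(1)\<close> decides which of the two maps hits \<open>1\<close>; they cannot both do so. Neither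
  characteristic zero nor the shape of the index set is needed.\<close>

lemma gr_lincomb:
  assumes "x \<in> gr I" "y \<in> gr I"
  shows "(\<lambda>S. a * x S + b * y S) \<in> gr I"
proof -
  have "{S. a * x S + b * y S \<noteq> 0} \<subseteq> {S. x S \<noteq> 0} \<union> {S. y S \<noteq> 0}" by auto
  moreover have "finite ({S. x S \<noteq> 0} \<union> {S. y S \<noteq> 0})" using assms by (simp add: gr_def)
  ultimately have "finite {S. a * x S + b * y S \<noteq> 0}" by (rule finite_subset)
  moreover have "finite S \<and> S \<subseteq> I" if "a * x S + b * y S \<noteq> 0" for S
  proof -
    from that have "x S \<noteq> 0 \<or> y S \<noteq> 0" by auto
    with assms show ?thesis unfolding gr_def by blast
  qed
  ultimately show ?thesis by (simp add: gr_def)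
qed

lemma gadd_in_gr: "x \<in> gr I \<Longrightarrow> y \<in> gr I \<Longrightarrow> gadd x y \<in> gr I"
  using gr_lincomb[of x I y 1 1] by (simp add: gadd_def)

lemma gscale_in_gr: "x \<in> gr I \<Longrightarrow> gscale c x \<in> gr I"
  using gr_lincomb[of x I x c 0] by (simp add: gscale_def)

lemma gone_in_gr: "gone \<in> gr I"
  by (auto simp: gr_def gone_def)

lemma gzero_in_gr: "gzero \<in> gr I"
  by (auto simp: gr_def gzero_def)

lemma gsign_empty_left [simp]: "gsign {} T = 1"
  by (simp add: gsign_def)

lemma gsign_empty_right [simp]: "gsign S {} = 1"
  by (simp add: gsign_def)

lemma gr_finite_Union_support: "x \<in> gr I \<Longrightarrow> finite (\<Union>{S. x S \<noteq> 0})"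
  unfolding gr_def by (intro finite_Union) auto

lemma gmul_nonzero_imp:
  assumes "gmul x y U \<noteq> 0"
  shows "finite U \<and> (\<exists>S\<subseteq>U. x S \<noteq> 0 \<and> y (U - S) \<noteq> 0)"
proof -
  have "finite U" using assms by (auto simp: gmul_def split: if_splits)
  with assms have "(\<Sum>S\<in>Pow U. gsign S (U - S) * x S * y (U - S)) \<noteq> 0"
    by (simp add: gmul_def)
  then obtain S where "S \<in> Pow U" "gsign S (U - S) * x S * y (U - S) \<noteq> 0"
    by (meson sum.neutral)
  with \<open>finite U\<close> show ?thesis by auto
qed

lemma gmul_in_gr:
  assumes x: "x \<in> gr I" and y: "y \<in> gr I"
  shows "gmul x y \<in> gr I"
proof -
  have "{U. gmul x y U \<noteq> 0} \<subseteq> (\<lambda>(S, T). S \<union> T) ` ({S. x S \<noteq> 0} \<times> {T. y T \<noteq> 0})"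
  proof
    fix U assume "U \<in> {U. gmul x y U \<noteq> 0}"
    then obtain S where "S \<subseteq> U" "x S \<noteq> 0" "y (U - S) \<noteq> 0" using gmul_nonzero_imp by blast
    then show "U \<in> (\<lambda>(S, T). S \<union> T) ` ({S. x S \<noteq> 0} \<times> {T. y T \<noteq> 0})"
      by (intro image_eqI[where x="(S, U - S)"]) auto
  qed
  moreover have "finite ((\<lambda>(S, T). S \<union> T) ` ({S. x S \<noteq> 0} \<times> {T. y T \<noteq> 0}))"
    using x y by (auto simp: gr_def)
  ultimately have "finite {U. gmul x y U \<noteq> 0}" by (rule finite_subset)
  moreover have "finite U \<and> U \<subseteq> I" if nonzero: "gmul x y U \<noteq> 0" for U
  proof -
    obtain S where "finite U" "S \<subseteq> U" "x S \<noteq> 0" "y (U - S) \<noteq> 0"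
      using gmul_nonzero_imp[OF nonzero] by blast
    moreover have "S \<subseteq> I" "U - S \<subseteq> I" using calculation x y by (auto simp: gr_def)
    ultimately show ?thesis by blast
  qed
  ultimately show ?thesis by (simp add: gr_def)
qed

lemma gmul_gone_left:
  assumes "y \<in> gr I"
  shows "gmul gone y = y"
proof
  fix U
  show "gmul gone y U = y U"
  proof (cases "finite U")
    case True
    have "(\<Sum>S\<in>Pow U. gsign S (U - S) * gone S * y (U - S)) = (\<Sum>S\<in>Pow U. if S = {} then y U else 0)"
      by (rule sum.cong) (auto simp: gone_def)
    with True show ?thesis by (simp add: gmul_def sum.delta')
  qed (use assms in \<open>auto simp: gmul_def gr_def\<close>)
qed

lemma gmul_gone_right:
  assumes "x \<in> gr I"
  shows "gmul x gone = x"
proof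
  fix U
  show "gmul x gone U = x U"
  proof (cases "finite U")
    case True
    have "(\<Sum>S\<in>Pow U. gsign S (U - S) * x S * gone (U - S)) = (\<Sum>S\<in>Pow U. if S = U then x U else 0)"
      by (rule sum.cong) (auto simp: gone_def)
    with True show ?thesis by (simp add: gmul_def sum.delta')
  qed (use assms in \<open>auto simp: gmul_def gr_def\<close>)
qed

lemma gmul_lincomb_left:
  "gmul (\<lambda>S. a * x S + b * y S) z = (\<lambda>U. a * gmul x z U + b * gmul y z U)"
  by (rule ext) (simp add: gmul_def sum_distrib_left sum.distrib algebra_simps)

lemma gmul_lincomb_right:
  "gmul z (\<lambda>S. a * x S + b * y S) = (\<lambda>U. a * gmul z x U + b * gmul z y U)"
  by (rule ext) (simp add: gmul_def sum_distrib_left sum.distrib algebra_simps)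

lemma gmul_empty: "gmul x y {} = x {} * y {}"
  by (simp add: gmul_def)

lemma gmul_gscale_left: "gmul (gscale a x) y = gscale a (gmul x y)"
  by (rule ext) (simp add: gmul_def gscale_def sum_distrib_left algebra_simps)

lemma gmul_gscale_right: "gmul x (gscale a y) = gscale a (gmul x y)"
  by (rule ext) (simp add: gmul_def gscale_def sum_distrib_left algebra_simps)

lemma gmul_gzero_left: "gmul gzero y = gzero"
  by (rule ext) (simp add: gmul_def gzero_def)

text \<open>Only the grading of the product is used below, not its signs: the component of
  \<open>gmul x y\<close> at \<open>U\<close> involves \<open>x\<close> and \<open>y\<close> only at complementary subsets of \<open>U\<close>.
  Hence an element without constant term is nilpotent.\<close>

definition supp_deg_ge :: "nat set \<Rightarrow> nat \<Rightarrow> (nat set \<Rightarrow> 'a::zero) \<Rightarrow> bool" where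
  "supp_deg_ge J k x \<longleftrightarrow> (\<forall>U. x U \<noteq> 0 \<longrightarrow> U \<subseteq> J \<and> k \<le> card U)"

lemma supp_deg_ge_gmul:
  assumes "supp_deg_ge J k x" "supp_deg_ge J l y"
  shows "supp_deg_ge J (k + l) (gmul x y)"
  unfolding supp_deg_ge_def
proof (intro allI impI)
  fix U assume "gmul x y U \<noteq> 0"
  then obtain S where U: "finite U" "S \<subseteq> U" and "x S \<noteq> 0" "y (U - S) \<noteq> 0"
    using gmul_nonzero_imp by blast
  with assms have "S \<subseteq> J" "k \<le> card S" "U - S \<subseteq> J" "l \<le> card (U - S)"
    unfolding supp_deg_ge_def by auto
  moreover have "finite S" using U by (rule finite_subset[rotated])
  with U have "card (U - S) = card U - card S" "card S \<le> card U"
    by (simp_all add: card_Diff_subset card_mono)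
  ultimately show "U \<subseteq> J \<and> k + l \<le> card U" using U by auto
qed

lemma supp_deg_ge_support:
  assumes "x \<in> gr I" "x {} = 0"
  shows "supp_deg_ge (\<Union>{S. x S \<noteq> 0}) 1 x"
  unfolding supp_deg_ge_def
proof (intro allI impI conjI)
  fix U assume U: "x U \<noteq> 0"
  then show "U \<subseteq> \<Union>{S. x S \<noteq> 0}" by blast
  from U assms have "finite U" "U \<noteq> {}" by (auto simp: gr_def)
  then show "1 \<le> card U" by (simp add: Suc_le_eq card_gt_0_iff)
qed

lemma supp_deg_ge_mono:
  "supp_deg_ge J k x \<Longrightarrow> J \<subseteq> J' \<Longrightarrow> k' \<le> k \<Longrightarrow> supp_deg_ge J' k' x"
  unfolding supp_deg_ge_def by (meson order_trans)

lemma supp_deg_ge_beyond_card: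
  assumes "finite J" "supp_deg_ge J (Suc (card J)) x"
  shows "x = gzero"
proof
  fix U
  show "x U = gzero U"
  proof (rule ccontr)
    assume "x U \<noteq> gzero U"
    with assms(2) have "U \<subseteq> J" "Suc (card J) \<le> card U"
      unfolding supp_deg_ge_def gzero_def by simp_all
    with card_mono[OF assms(1)] show False by (meson not_less_eq_eq)
  qed
qed

lemma gmul_left_iter_nilpotent:
  assumes u: "u \<in> gr I" "u {} = 0" and v: "v \<in> gr I"
  shows "\<exists>k. (gmul u ^^ k) v = gzero"
proof -
  define J where "J = \<Union>{S. u S \<noteq> 0} \<union> \<Union>{S. v S \<noteq> 0}"
  have "finite J" unfolding J_def using u v by (simp add: gr_finite_Union_support)
  have "supp_deg_ge J 1 u" unfolding J_def
    by (rule supp_deg_ge_mono[OF supp_deg_ge_support[OF u]]) auto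
  have "supp_deg_ge J k ((gmul u ^^ k) v)" for k
  proof (induction k)
    case 0
    show ?case unfolding J_def supp_deg_ge_def by auto
  next
    case (Suc k)
    from supp_deg_ge_gmul[OF \<open>supp_deg_ge J 1 u\<close> this] show ?case by simp
  qed
  with supp_deg_ge_beyond_card[OF \<open>finite J\<close>] show ?thesis by blast
qed

lemma gmul_square_iter_nilpotent:
  assumes "a \<in> gr I" "a {} = 0"
  shows "\<exists>k. ((\<lambda>b. gmul b b) ^^ k) a = gzero"
proof -
  define J where "J = \<Union>{S. a S \<noteq> 0}"
  have "finite J" unfolding J_def using assms by (simp add: gr_finite_Union_support)
  have "supp_deg_ge J (Suc k) (((\<lambda>b. gmul b b) ^^ k) a)" for k
  proof (induction k)
    case 0
    show ?case unfolding J_def using supp_deg_ge_support[OF assms] by simp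
  next
    case (Suc k)
    from supp_deg_ge_mono[OF supp_deg_ge_gmul[OF this this]] show ?case by simp
  qed
  with supp_deg_ge_beyond_card[OF \<open>finite J\<close>] show ?thesis by blast
qed

definition rb_prod ::
    "((nat set \<Rightarrow> 'a::field) \<Rightarrow> (nat set \<Rightarrow> 'a)) \<Rightarrow> 'a \<Rightarrow> (nat set \<Rightarrow> 'a) \<Rightarrow> (nat set \<Rightarrow> 'a) \<Rightarrow> (nat set \<Rightarrow> 'a)" where
  "rb_prod R lam x y = (\<lambda>U. gmul (R x) y U + gmul x (R y) U + lam * gmul x y U)"

definition rshift ::
    "((nat set \<Rightarrow> 'a::field) \<Rightarrow> (nat set \<Rightarrow> 'a)) \<Rightarrow> 'a \<Rightarrow> (nat set \<Rightarrow> 'a) \<Rightarrow> (nat set \<Rightarrow> 'a)" where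
  "rshift R c x = (\<lambda>S. R x S + c * x S)"

lemma rshift_zero [simp]: "rshift R 0 = R"
  by (simp add: rshift_def fun_eq_iff)

lemma rota_baxter_in_gr: "rota_baxter I lam R \<Longrightarrow> x \<in> gr I \<Longrightarrow> R x \<in> gr I"
  by (simp add: rota_baxter_def gr_linear_def)

lemma rota_baxter_lincomb:
  assumes rb: "rota_baxter I lam R" and x: "x \<in> gr I" and y: "y \<in> gr I"
  shows "R (\<lambda>S. a * x S + b * y S) = (\<lambda>S. a * R x S + b * R y S)"
proof -
  have lin: "gr_linear I R" using rb by (simp add: rota_baxter_def)
  have "R (gadd (gscale a x) (gscale b y)) = gadd (gscale a (R x)) (gscale b (R y))"
    using lin x y gscale_in_gr[OF x] gscale_in_gr[OF y] by (simp add: gr_linear_def)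
  then show ?thesis by (simp add: gadd_def gscale_def)
qed

lemma rota_baxter_gmul:
  "rota_baxter I lam R \<Longrightarrow> x \<in> gr I \<Longrightarrow> y \<in> gr I \<Longrightarrow> gmul (R x) (R y) = R (rb_prod R lam x y)"
  by (simp add: rota_baxter_def rb_prod_def gadd_def gscale_def)

lemma rb_prod_in_gr:
  assumes rb: "rota_baxter I lam R" and "x \<in> gr I" "y \<in> gr I"
  shows "rb_prod R lam x y \<in> gr I"
proof -
  have "rb_prod R lam x y = gadd (gadd (gmul (R x) y) (gmul x (R y))) (gscale lam (gmul x y))"
    by (simp add: rb_prod_def gadd_def gscale_def)
  then show ?thesis
    using assms rota_baxter_in_gr[OF rb] by (simp add: gadd_in_gr gscale_in_gr gmul_in_gr)
qed

lemma rshift_in_gr: "rota_baxter I lam R \<Longrightarrow> x \<in> gr I \<Longrightarrow> rshift R c x \<in> gr I"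
  using gr_lincomb[OF rota_baxter_in_gr, of I lam R x x 1 c] by (simp add: rshift_def)

lemma rshift_lincomb:
  assumes "rota_baxter I lam R" "x \<in> gr I" "y \<in> gr I"
  shows "rshift R c (\<lambda>S. a * x S + b * y S) = (\<lambda>S. a * rshift R c x S + b * rshift R c y S)"
  by (rule ext) (simp add: rshift_def rota_baxter_lincomb[OF assms] algebra_simps)

lemma rshift_gscale:
  assumes "rota_baxter I lam R" "x \<in> gr I"
  shows "rshift R c (gscale a x) = gscale a (rshift R c x)"
  using rshift_lincomb[OF assms assms(2), of c a 0] by (simp add: gscale_def)

lemma rshift_gmul:
  assumes rb: "rota_baxter I lam R" and c: "c * c = c * lam" and x: "x \<in> gr I" and y: "y \<in> gr I"
  shows "gmul (rshift R c x) (rshift R c y) = rshift R c (rb_prod R lam x y)"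
proof
  fix U
  have "c * (c * gmul x y U) = c * (lam * gmul x y U)"
    using c by (simp add: mult.assoc[symmetric])
  moreover have "R (rb_prod R lam x y) U = gmul (R x) (R y) U"
    using rota_baxter_gmul[OF rb x y] by simp
  ultimately show "gmul (rshift R c x) (rshift R c y) U = rshift R c (rb_prod R lam x y) U"
    using gmul_lincomb_left[of 1 "R x" c x] gmul_lincomb_right[of _ 1 "R y" c y]
    unfolding rshift_def by (simp add: rb_prod_def algebra_simps)
qed

lemma rshift_rshift:
  assumes rb: "rota_baxter I lam R" and x: "x \<in> gr I"
  shows "rshift R c (rshift R d x) = (\<lambda>S. R (R x) S + (c + d) * R x S + c * d * x S)"
  using rota_baxter_lincomb[OF rb rota_baxter_in_gr[OF rb x] x, of 1 d]
  by (simp add: rshift_def algebra_simps)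

lemma rshift_gscale_gone_empty:
  "rota_baxter I lam R \<Longrightarrow> rshift R c (gscale k gone) {} = k * (R gone {} + c)"
  using rota_baxter_lincomb[OF _ gone_in_gr gone_in_gr, of I lam R k 0]
  by (simp add: rshift_def gscale_def gone_def algebra_simps)

text \<open>Newton's iteration \<open>w \<mapsto> 2w - w\<cdot>w\<close> for the preimage of \<open>1\<close>: since \<open>rshift R c\<close> is
  multiplicative, the defect \<open>1 - rshift R c w\<close> is squared in each step.\<close>

lemma rshift_reaches_gone:
  assumes rb: "rota_baxter I lam R" and c: "c * c = c * lam" and d: "d * d = d * lam"
    and y: "y \<in> gr I" and yc: "rshift R c y {} = 1"
  shows "\<exists>w\<in>gr I. rshift R c w = gone \<and> (rshift R d y {} = 0 \<longrightarrow> rshift R d w {} = 0)"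
proof -
  define newton where "newton w = (\<lambda>S. 2 * w S + (-1) * rb_prod R lam w w S)" for w
  define defect where "defect w = (\<lambda>S. 1 * gone S + (-1) * rshift R c w S)" for w
  have newton_in_gr: "newton w \<in> gr I" if "w \<in> gr I" for w
    unfolding newton_def by (rule gr_lincomb[OF that rb_prod_in_gr[OF rb that that]])
  have defect_in_gr: "defect w \<in> gr I" if "w \<in> gr I" for w
    unfolding defect_def by (rule gr_lincomb[OF gone_in_gr rshift_in_gr[OF rb that]])
  have rshift_newton: "rshift R e (newton w) = (\<lambda>S. 2 * rshift R e w S + (-1) * gmul (rshift R e w) (rshift R e w) S)"
    if "w \<in> gr I" "e * e = e * lam" for w e
    unfolding newton_def rshift_lincomb[OF rb that(1) rb_prod_in_gr[OF rb that(1) that(1)]]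
      rshift_gmul[OF rb that(2) that(1) that(1)] ..
  have defect_newton: "defect (newton w) = gmul (defect w) (defect w)" if w: "w \<in> gr I" for w
  proof -
    let ?t = "rshift R c w"
    have t: "?t \<in> gr I" by (rule rshift_in_gr[OF rb w])
    have dw: "defect w = (\<lambda>S. 1 * gone S + (-1) * ?t S)" by (simp add: defect_def)
    have "gmul (defect w) (defect w) = (\<lambda>U. 1 * gmul gone (defect w) U + (-1) * gmul ?t (defect w) U)"
      by (subst (1) dw) (rule gmul_lincomb_left)
    also have "gmul ?t (defect w) = (\<lambda>U. 1 * gmul ?t gone U + (-1) * gmul ?t ?t U)"
      by (subst dw) (rule gmul_lincomb_right)
    finally show ?thesis
      unfolding gmul_gone_left[OF defect_in_gr[OF w]] gmul_gone_right[OF t]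
      by (simp add: defect_def rshift_newton[OF w c] algebra_simps)
  qed
  have iter: "(newton ^^ k) y \<in> gr I \<and> defect ((newton ^^ k) y) = ((\<lambda>b. gmul b b) ^^ k) (defect y)
      \<and> (rshift R d y {} = 0 \<longrightarrow> rshift R d ((newton ^^ k) y) {} = 0)" for k
  proof (induction k)
    case (Suc k)
    let ?w = "(newton ^^ k) y"
    have w: "?w \<in> gr I" using Suc.IH by simp
    have "rshift R d (newton ?w) {} = 2 * rshift R d ?w {} - rshift R d ?w {} * rshift R d ?w {}"
      by (simp add: rshift_newton[OF w d] gmul_empty)
    then show ?case using Suc.IH newton_in_gr[OF w] defect_newton[OF w] by simp
  qed (use y in simp)
  have "defect y {} = 0" using yc by (simp add: defect_def gone_def)
  then obtain k where "((\<lambda>b. gmul b b) ^^ k) (defect y) = gzero"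
    using gmul_square_iter_nilpotent[OF defect_in_gr[OF y]] by blast
  with iter[of k] have "rshift R c ((newton ^^ k) y) = gone"
    by (auto simp: fun_eq_iff defect_def gzero_def)
  with iter[of k] show ?thesis by blast
qed

text \<open>Left multiplication by \<open>w\<close> in \<open>rb_prod\<close> fixes \<open>rshift R c\<close> and multiplies \<open>rshift R d\<close>
  by an element without constant term, so after finitely many steps \<open>v\<close> the difference
  \<open>e = v - x\<close> satisfies \<open>R e = -c e\<close> and \<open>rshift R d x = (c - d) e\<close>, which \<open>rshift R c\<close> kills.\<close>

lemma rshift_rshift_vanishes:
  assumes rb: "rota_baxter I lam R" and c: "c * c = c * lam" and d: "d * d = d * lam"
    and w: "w \<in> gr I" and wc: "rshift R c w = gone" and wd: "rshift R d w {} = 0"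
    and x: "x \<in> gr I"
  shows "rshift R c (rshift R d x) = gzero"
proof -
  let ?u = "rshift R d w"
  have iter: "(rb_prod R lam w ^^ k) x \<in> gr I
      \<and> rshift R c ((rb_prod R lam w ^^ k) x) = rshift R c x
      \<and> rshift R d ((rb_prod R lam w ^^ k) x) = (gmul ?u ^^ k) (rshift R d x)" for k
  proof (induction k)
    case (Suc k)
    let ?v = "(rb_prod R lam w ^^ k) x"
    have v: "?v \<in> gr I" using Suc.IH by simp
    have "rshift R c (rb_prod R lam w ?v) = gmul (rshift R c w) (rshift R c ?v)"
      by (rule rshift_gmul[OF rb c w v, symmetric])
    also have "\<dots> = rshift R c ?v" unfolding wc by (rule gmul_gone_left[OF rshift_in_gr[OF rb v]])
    finally show ?case
      using Suc.IH rb_prod_in_gr[OF rb w v] rshift_gmul[OF rb d w v] by simp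
  qed (use x in simp)
  obtain k where nilpotent: "(gmul ?u ^^ k) (rshift R d x) = gzero"
    using gmul_left_iter_nilpotent[OF rshift_in_gr[OF rb w] wd rshift_in_gr[OF rb x]] by blast
  have v: "(rb_prod R lam w ^^ k) x \<in> gr I" using iter by simp
  define e where "e = (\<lambda>S. 1 * (rb_prod R lam w ^^ k) x S + (-1) * x S)"
  have e: "e \<in> gr I" unfolding e_def by (rule gr_lincomb[OF v x])
  have ec: "rshift R c e = gzero"
    unfolding e_def rshift_lincomb[OF rb v x] using iter[of k] by (simp add: gzero_def)
  have ed: "rshift R d e = (\<lambda>S. - rshift R d x S)"
    unfolding e_def rshift_lincomb[OF rb v x] using iter[of k] nilpotent by (simp add: gzero_def)
  have Re: "R e S = - (c * e S)" for S
    using fun_cong[OF ec, of S] by (simp add: rshift_def gzero_def add_eq_0_iff2)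
  have "rshift R d x S = - rshift R d e S" for S
    using fun_cong[OF ed, of S] by simp
  then have "rshift R d x = (\<lambda>S. (c - d) * e S + 0 * e S)"
    by (simp add: fun_eq_iff rshift_def Re algebra_simps)
  with ec show ?thesis
    using rshift_lincomb[OF rb e e, of c "c - d" 0] by (simp add: gzero_def)
qed

text \<open>With \<open>p = rb_prod R lam z w\<close>, \<open>R p = R w\<close> and \<open>(R + lam id) p = (R + lam id) z\<close>,
  which forces \<open>p - w = z\<close> and hence \<open>R z = 0\<close>.\<close>

lemma rshift_units_incompatible:
  assumes rb: "rota_baxter I lam R" and lam: "lam \<noteq> 0" and z: "z \<in> gr I" and w: "w \<in> gr I"
    and Rz: "R z = gone" and wl: "rshift R lam w = gone"
  shows False
proof -
  let ?p = "rb_prod R lam z w"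
  have p: "?p \<in> gr I" by (rule rb_prod_in_gr[OF rb z w])
  have Rp: "R ?p = R w"
    using rshift_gmul[OF rb _ z w, where c=0] Rz gmul_gone_left[OF rota_baxter_in_gr[OF rb w]]
    by simp
  have "rshift R lam ?p = rshift R lam z"
    using rshift_gmul[OF rb _ z w, where c=lam] wl gmul_gone_right[OF rshift_in_gr[OF rb z]]
    by simp
  then have p_z: "R w S + lam * ?p S = gone S + lam * z S" for S
    using Rp Rz by (simp add: rshift_def fun_eq_iff)
  have gone_w: "gone S = R w S + lam * w S" for S
    using wl by (simp add: rshift_def fun_eq_iff)
  define e where "e = (\<lambda>S. 1 * ?p S + (-1) * w S)"
  have "lam * z S = lam * e S" for S
    using p_z[of S] gone_w[of S] by (simp add: e_def algebra_simps)
  with lam have "z = e" by (simp add: fun_eq_iff)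
  moreover have "R e = (\<lambda>S. 1 * R ?p S + (-1) * R w S)"
    unfolding e_def by (rule rota_baxter_lincomb[OF rb p w])
  ultimately have "R z {} = 0" using Rp by simp
  with Rz show False by (simp add: gone_def)
qed

lemma rota_baxter_square_of_preimage_gone:
  assumes rb: "rota_baxter I lam R" and cd: "c + d = lam" "c * d = 0"
    and w: "w \<in> gr I" and wc: "rshift R c w = gone" and wd: "rshift R d w {} = 0"
  shows "(\<forall>x\<in>gr I. R (R x) = gscale (- lam) (R x)) \<and> R gone = gscale (- d) gone"
proof -
  have c: "c * c = c * lam" and d: "d * d = d * lam"
    using cd by (auto simp: algebra_simps)
  have RR: "R (R x) S + lam * R x S = 0" if x: "x \<in> gr I" for x S
    using fun_cong[OF rshift_rshift_vanishes[OF rb c d w wc wd x], of S]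
      rshift_rshift[OF rb x, of c d] cd by (simp add: gzero_def)
  have "rshift R d gone = rshift R d (rshift R c w)" using wc by simp
  also have "\<dots> = gzero"
    using RR[OF w] rshift_rshift[OF rb w, of d c] cd by (simp add: fun_eq_iff gzero_def algebra_simps)
  finally have "R gone = gscale (- d) gone"
    by (simp add: fun_eq_iff rshift_def gscale_def gzero_def add_eq_0_iff2)
  moreover have "R (R x) = gscale (- lam) (R x)" if "x \<in> gr I" for x
    using RR[OF that] by (simp add: fun_eq_iff gscale_def add_eq_0_iff2)
  ultimately show ?thesis by blast
qed

text \<open>\<open>R + c id\<close> maps \<open>1\<close> to an element with constant term \<open>\<alpha> + c\<close>, where \<open>\<alpha>\<close> is the
  constant term of \<open>R 1\<close>; so at least one of \<open>R\<close> and \<open>R + lam id\<close> hits \<open>1\<close>, and exactly one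
  does since both cannot.\<close>

lemma rota_baxter_square_and_gone:
  assumes rb: "rota_baxter I lam R" and lam: "lam \<noteq> 0"
  shows "\<exists>d\<in>{0, lam}. (\<forall>x\<in>gr I. R (R x) = gscale (- lam) (R x)) \<and> R gone = gscale (- d) gone"
proof -
  define \<alpha> where "\<alpha> = R gone {}"
  have unit: "\<exists>w\<in>gr I. rshift R c w = gone \<and> (\<alpha> + d = 0 \<longrightarrow> rshift R d w {} = 0)"
    if c: "c * c = c * lam" and d: "d * d = d * lam" and \<alpha>c: "\<alpha> + c \<noteq> 0" for c d
  proof -
    let ?y = "gscale (1 / (\<alpha> + c)) gone"
    have "rshift R e ?y {} = (\<alpha> + e) / (\<alpha> + c)" for e
      by (simp add: rshift_gscale_gone_empty[OF rb] \<alpha>_def)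
    with rshift_reaches_gone[OF rb c d gscale_in_gr[OF gone_in_gr], of "1 / (\<alpha> + c)"] \<alpha>c
    show ?thesis by simp
  qed
  consider "\<alpha> = 0" | "\<alpha> + lam = 0" | "\<alpha> \<noteq> 0" "\<alpha> + lam \<noteq> 0" by blast
  then show ?thesis
  proof cases
    case 1
    with lam unit[of lam 0] obtain w where "w \<in> gr I" "rshift R lam w = gone" "rshift R 0 w {} = 0"
      by auto
    with rota_baxter_square_of_preimage_gone[OF rb, of lam 0] show ?thesis by auto
  next
    case 2
    with lam have "\<alpha> \<noteq> 0" by (simp add: add_eq_0_iff2)
    with 2 unit[of 0 lam] obtain w where "w \<in> gr I" "rshift R 0 w = gone" "rshift R lam w {} = 0"
      by auto
    with rota_baxter_square_of_preimage_gone[OF rb, of 0 lam] show ?thesis by auto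
  next
    case 3
    with unit[of 0 0] unit[of lam lam] obtain z w
      where "z \<in> gr I" "R z = gone" "w \<in> gr I" "rshift R lam w = gone"
      by auto
    with rshift_units_incompatible[OF rb lam] show ?thesis by blast
  qed
qed

lemma rshift_kernel_subalgebra:
  assumes rb: "rota_baxter I lam R" and lam: "lam \<noteq> 0" and c: "c * c = c * lam"
  shows "gr_subalgebra I {x \<in> gr I. rshift R c x = gzero}"
proof -
  let ?K = "{x \<in> gr I. rshift R c x = gzero}"
  have lincomb: "(\<lambda>S. a * x S + b * y S) \<in> ?K" if "x \<in> ?K" "y \<in> ?K" for a b x y
    using that rshift_lincomb[OF rb, of x y c a b] by (simp add: gr_lincomb gzero_def)
  have "rshift R c gzero = gzero"
    using rshift_gscale[OF rb gzero_in_gr, of c 0] by (simp add: gscale_def gzero_def)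
  then have "gzero \<in> ?K" using gzero_in_gr by blast
  moreover have "gmul x y \<in> ?K" if x: "x \<in> ?K" and y: "y \<in> ?K" for x y
  proof -
    have xy: "gmul x y \<in> gr I" using x y by (simp add: gmul_in_gr)
    have Rx: "R x = gscale (- c) x" and Ry: "R y = gscale (- c) y"
      using x y by (auto simp: fun_eq_iff rshift_def gscale_def gzero_def add_eq_0_iff2)
    have "rb_prod R lam x y = gscale (lam - c - c) (gmul x y)"
      unfolding rb_prod_def Rx Ry gmul_gscale_left gmul_gscale_right
      by (simp add: gscale_def fun_eq_iff algebra_simps)
    then have "gscale (lam - c - c) (rshift R c (gmul x y)) = rshift R c (rb_prod R lam x y)"
      by (simp add: rshift_gscale[OF rb xy])
    also have "\<dots> = gmul (rshift R c x) (rshift R c y)"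
      using x y by (intro rshift_gmul[OF rb c, symmetric]) simp_all
    also have "\<dots> = gzero"
      using x y by (simp add: gmul_gzero_left)
    finally have "gscale (lam - c - c) (rshift R c (gmul x y)) = gzero" .
    moreover have "lam - c - c \<noteq> 0"
    proof (cases "c = 0")
      case False
      with c have "c = lam" by simp
      with lam show ?thesis by (simp only: diff_self diff_0 neg_equal_0_iff_equal not_False_eq_True)
    qed (use lam in \<open>simp only: diff_zero not_False_eq_True\<close>)
    ultimately show ?thesis
      using xy by (simp add: gscale_def gzero_def fun_eq_iff)
  qed
  moreover have "gadd x y \<in> ?K" if "x \<in> ?K" "y \<in> ?K" for x y
    using lincomb[OF that, of 1 1] by (simp add: gadd_def)
  moreover have "gscale a x \<in> ?K" if "x \<in> ?K" for a x
    using lincomb[OF that that, of a 0] by (simp add: gscale_def)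
  ultimately show ?thesis unfolding gr_subalgebra_def by blast
qed

lemma rota_baxter_splitting:
  assumes rb: "rota_baxter I lam R" and lam: "lam \<noteq> 0"
    and square: "\<forall>x\<in>gr I. R (R x) = gscale (- lam) (R x)"
  shows "splitting I lam R"
proof -
  define A1 where "A1 = {x \<in> gr I. rshift R 0 x = gzero}"
  define A2 where "A2 = {x \<in> gr I. rshift R lam x = gzero}"
  have A1: "x \<in> A1 \<longleftrightarrow> x \<in> gr I \<and> R x = gzero" for x
    by (simp add: A1_def)
  have A2: "x \<in> A2 \<longleftrightarrow> x \<in> gr I \<and> R x = gscale (- lam) x" for x
    by (auto simp: A2_def rshift_def gscale_def gzero_def fun_eq_iff add_eq_0_iff2)
  have sub: "gr_subalgebra I A1" "gr_subalgebra I A2"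
    unfolding A1_def A2_def by (rule rshift_kernel_subalgebra[OF rb lam]; simp)+
  have "A1 \<inter> A2 \<subseteq> {gzero}"
    using lam by (auto simp: A1 A2 fun_eq_iff gscale_def gzero_def)
  with sub have "A1 \<inter> A2 = {gzero}" by (auto simp: gr_subalgebra_def)
  moreover have "\<exists>a1\<in>A1. \<exists>a2\<in>A2. x = gadd a1 a2" if x: "x \<in> gr I" for x
  proof -
    let ?Rx = "R x"
    have Rx: "?Rx \<in> gr I" by (rule rota_baxter_in_gr[OF rb x])
    define a1 where "a1 = (\<lambda>S. 1 * x S + (1 / lam) * ?Rx S)"
    define a2 where "a2 = (\<lambda>S. 0 * x S + (- 1 / lam) * ?Rx S)"
    have "a1 \<in> gr I" "a2 \<in> gr I" unfolding a1_def a2_def by (rule gr_lincomb[OF x Rx])+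
    moreover have "R a1 = gzero" "R a2 = gscale (- lam) a2"
      unfolding a1_def a2_def rota_baxter_lincomb[OF rb x Rx]
      using square x lam by (simp_all add: fun_eq_iff gscale_def gzero_def)
    ultimately have "a1 \<in> A1" "a2 \<in> A2" by (simp_all add: A1 A2)
    moreover have "x = gadd a1 a2" by (simp add: a1_def a2_def gadd_def)
    ultimately show ?thesis by blast
  qed
  moreover have "R (gadd a1 a2) = gscale (- lam) a2" if "a1 \<in> A1" "a2 \<in> A2" for a1 a2
    using that rota_baxter_lincomb[OF rb, of a1 a2 1 1]
    by (simp add: A1 A2 gadd_def gscale_def gzero_def)
  ultimately show ?thesis unfolding splitting_def using sub by blast
qed

theorem corollary4:
  fixes lam :: "'a::field_char_0"
    and R :: "(nat set \<Rightarrow> 'a) \<Rightarrow> (nat set \<Rightarrow> 'a)"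
    and I :: "nat set" and n :: nat
  assumes "I = {1..n} \<or> I = {1..}"
    and "lam \<noteq> 0"
    and "rota_baxter I lam R"
  shows "splitting I lam R \<and> (R gone = gzero \<or> R gone = gscale (- lam) gone)"
proof -
  obtain d where d: "d \<in> {0, lam}" and square: "\<forall>x\<in>gr I. R (R x) = gscale (- lam) (R x)"
    and "R gone = gscale (- d) gone"
    using rota_baxter_square_and_gone[OF assms(3,2)] by blast
  with d have "R gone = gzero \<or> R gone = gscale (- lam) gone"
    by (auto simp: gscale_def gzero_def)
  with rota_baxter_splitting[OF assms(3,2) square] show ?thesis by blast
qed

end
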